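(* Let $A$ be a non-zero $p\times p$ adjacency matrix and let $\lambda_{min}$ be the least eigenvalue of $A$. Then $t_{cp}=t_{ppt}=-p\,\lambda_{min}$.
   Context: An adjacency matrix is a self-adjoint $p\times p$ matrix $A=(a_{i,j})$ with entries in $\{0,1\}$ and zero diagonal (the adjacency matrix of a simple graph on $p$ vertices). For a matrix $A$, $S_A: M_p\to M_p$ is the Schur product map $S_A(B)=(a_{i,j}b_{i,j})$. Let $tr(X)=\frac1p\mathrm{Tr}(X)$ be the normalized trace and $\delta: M_p\to M_p$, $\delta(X)=tr(X)I_p$. For real $t$ define $\gamma_t=t\delta+S_A$. Set $t_{cp}=\min\{t:\gamma_t\text{ is completely positive}\}$ and $t_{ppt}=\min\{t:\gamma_t\text{ is PPT}\}$, where a completely positive map $\phi:M_p\to M_p$ is PPT if $T\circ\phi$ is completely positive, $T$ the transpose on $M_p$. *)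

theory Defs
  imports "Jordan_Normal_Form.Schur_Decomposition" "Jordan_Normal_Form.Char_Poly"
begin

definition adjacency_matrix :: "nat \<Rightarrow> real mat \<Rightarrow> bool" where
  "adjacency_matrix p A \<longleftrightarrow> A \<in> carrier_mat p p \<and> A\<^sup>T = A
     \<and> (\<forall>i<p. \<forall>j<p. A $$ (i,j) = 0 \<or> A $$ (i,j) = 1)
     \<and> (\<forall>i<p. A $$ (i,i) = 0)"

text \<open>Least eigenvalue (A is real symmetric, so its eigenvalues are real).\<close>
definition lambda_min :: "real mat \<Rightarrow> real" where
  "lambda_min A = Min {k. eigenvalue A k}"

definition psd :: "nat \<Rightarrow> complex mat \<Rightarrow> bool" where
  "psd n X \<longleftrightarrow> X \<in> carrier_mat n n \<and> mat_adjoint X = X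
     \<and> (\<forall>v \<in> carrier_vec n. Im (conjugate v \<bullet> (X *\<^sub>v v)) = 0
                              \<and> 0 \<le> Re (conjugate v \<bullet> (X *\<^sub>v v)))"

definition positive_map :: "nat \<Rightarrow> (complex mat \<Rightarrow> complex mat) \<Rightarrow> bool" where
  "positive_map p \<phi> \<longleftrightarrow> (\<forall>X. psd p X \<longrightarrow> psd p (\<phi> X))"

text \<open>The amplification id_n \<otimes> \<phi> : M_n(M_p) \<rightarrow> M_n(M_p), an element of M_n(M_p)
  being an (n p) x (n p) matrix whose (i,j) block (p x p) is rows i p .. i p + p - 1,
  columns j p .. j p + p - 1; \<phi> is applied blockwise.\<close>
definition ampl :: "nat \<Rightarrow> nat \<Rightarrow> (complex mat \<Rightarrow> complex mat) \<Rightarrow> complex mat \<Rightarrow> complex mat" where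
  "ampl n p \<phi> X = mat (n*p) (n*p) (\<lambda>(r,c).
      \<phi> (mat p p (\<lambda>(a,b). X $$ (r div p * p + a, c div p * p + b))) $$ (r mod p, c mod p))"

definition completely_positive :: "nat \<Rightarrow> (complex mat \<Rightarrow> complex mat) \<Rightarrow> bool" where
  "completely_positive p \<phi> \<longleftrightarrow>
     (\<forall>n. \<forall>X. psd (n*p) X \<longrightarrow> psd (n*p) (ampl n p \<phi> X))"

definition is_PPT :: "nat \<Rightarrow> (complex mat \<Rightarrow> complex mat) \<Rightarrow> bool" where
  "is_PPT p \<phi> \<longleftrightarrow> completely_positive p \<phi> \<and> completely_positive p (\<lambda>X. (\<phi> X)\<^sup>T)"

definition ntr :: "nat \<Rightarrow> complex mat \<Rightarrow> complex" where
  "ntr p X = (\<Sum>i<p. X $$ (i,i)) / of_nat p"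

definition delta_map :: "nat \<Rightarrow> complex mat \<Rightarrow> complex mat" where
  "delta_map p X = ntr p X \<cdot>\<^sub>m 1\<^sub>m p"

definition schur_map :: "real mat \<Rightarrow> complex mat \<Rightarrow> complex mat" where
  "schur_map A B = mat (dim_row A) (dim_col A) (\<lambda>(i,j). complex_of_real (A $$ (i,j)) * B $$ (i,j))"

definition gamma :: "real mat \<Rightarrow> real \<Rightarrow> complex mat \<Rightarrow> complex mat" where
  "gamma A t X = complex_of_real t \<cdot>\<^sub>m delta_map (dim_row A) X + schur_map A X"

definition t_cp :: "real mat \<Rightarrow> real" where
  "t_cp A = (LEAST t. completely_positive (dim_row A) (gamma A t))"

definition t_ppt :: "real mat \<Rightarrow> real" where
  "t_ppt A = (LEAST t. is_PPT (dim_row A) (gamma A t))"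

end

theory Submission
  imports Defs "HOL-Analysis.Function_Topology"
begin

text \<open>For psd \<open>X \<in> M\<^sub>n(M\<^sub>p)\<close> and a vector \<open>u\<close> with coordinates \<open>U r a\<close>, the quadratic form of
  \<open>(id \<otimes> \<gamma>\<^sub>t)(X)\<close> at \<open>u\<close> is \<open>(t/p) \<Sum>\<^sub>a\<^sub>,\<^sub>c B(a,c,a,c) + \<Sum>\<^sub>a\<^sub>,\<^sub>b A\<^sub>a\<^sub>b B(a,a,b,b)\<close>, where \<open>B\<close> is the
  compression \<open>(U \<otimes> 1)\<^sup>* X (U \<otimes> 1)\<close>; for \<open>T \<circ> \<gamma>\<^sub>t\<close> the second sum becomes
  \<open>\<Sum>\<^sub>a\<^sub>,\<^sub>b A\<^sub>b\<^sub>a B(a,b,b,a)\<close>. Writing \<open>A - \<lambda>\<^sub>m\<^sub>i\<^sub>n I\<close> as a sum of squares of linear forms shows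
  that the first form is nonnegative once \<open>t \<ge> -p \<lambda>\<^sub>m\<^sub>i\<^sub>n\<close>. For the second, positivity of \<open>B\<close> gives
  \<open>B(a,b,b,a) + B(b,a,a,b) \<ge> -(B(a,b,a,b) + B(b,a,b,a))\<close>, so it is nonnegative once \<open>t \<ge> p\<close>;
  this is the weaker condition because \<open>\<lambda>\<^sub>m\<^sub>i\<^sub>n \<le> -1\<close> for a non-zero graph. Conversely, applying
  \<open>id \<otimes> \<gamma>\<^sub>t\<close> to the maximally entangled projection and testing at a \<open>\<lambda>\<^sub>m\<^sub>i\<^sub>n\<close>-eigenvector
  shows that \<open>t \<ge> -p \<lambda>\<^sub>m\<^sub>i\<^sub>n\<close> is already necessary for complete positivity.\<close>

lemma sum_lessThan_mult_blocks:
  fixes n p :: nat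
  shows "(\<Sum>i<n*p. f i) = (\<Sum>r<n. \<Sum>a<p. f (r*p + a))"
proof -
  have "(\<Sum>i\<in>{r*p..<r*p + p}. f i) = (\<Sum>a<p. f (r*p + a))" for r
    using sum.shift_bounds_nat_ivl[of f 0 "r*p" p] by (simp add: add.commute lessThan_atLeast0)
  then show ?thesis
    using sum.nat_group[of "\<lambda>i. f i" p n] by simp
qed

lemma block_index:
  fixes r n a p :: nat
  assumes "r < n" "a < p"
  shows "r*p + a < n*p" "(r*p + a) div p = r" "(r*p + a) mod p = a"
proof -
  have "r*p + a < (r + 1)*p" using assms by simp
  also have "\<dots> \<le> n*p" using assms by (intro mult_le_mono1) simp
  finally show "r*p + a < n*p" .
  show "(r*p + a) div p = r" "(r*p + a) mod p = a" using assms by auto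
qed

lemma mat_adjoint_index:
  "i < dim_col A \<Longrightarrow> j < dim_row A \<Longrightarrow> mat_adjoint A $$ (i,j) = conjugate (A $$ (j,i))"
  unfolding mat_adjoint_def by (simp add: mat_of_rows_def)

lemma mat_adjoint_dims [simp]:
  "dim_row (mat_adjoint A) = dim_col A" "dim_col (mat_adjoint A) = dim_row A"
  unfolding mat_adjoint_def by (auto simp: mat_of_rows_def)

lemma self_adjoint_index:
  fixes X :: "complex mat"
  assumes "X \<in> carrier_mat m m" "mat_adjoint X = X" "i < m" "j < m"
  shows "X $$ (j,i) = cnj (X $$ (i,j))"
  using mat_adjoint_index[of j X i] assms by (simp add: conjugate_complex_def)

lemma quadratic_form_sum:
  fixes X :: "complex mat"
  assumes "X \<in> carrier_mat m m" "v \<in> carrier_vec m"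
  shows "conjugate v \<bullet> (X *\<^sub>v v) = (\<Sum>i<m. \<Sum>j<m. cnj (v$i) * X$$(i,j) * v$j)"
proof -
  have "conjugate v \<bullet> (X *\<^sub>v v) = (\<Sum>i<m. cnj (v$i) * (\<Sum>j<m. X$$(i,j) * v$j))"
    using assms
    by (auto simp: scalar_prod_def lessThan_atLeast0 conjugate_complex_def intro!: sum.cong)
  then show ?thesis by (simp add: sum_distrib_left mult.assoc)
qed

lemma quadratic_form_blocks:
  fixes X :: "complex mat"
  assumes "X \<in> carrier_mat (n*p) (n*p)" "v \<in> carrier_vec (n*p)"
  shows "conjugate v \<bullet> (X *\<^sub>v v) =
    (\<Sum>r<n. \<Sum>a<p. \<Sum>s<n. \<Sum>b<p. cnj (v$(r*p+a)) * X$$(r*p+a, s*p+b) * v$(s*p+b))"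
  by (simp only: quadratic_form_sum[OF assms] sum_lessThan_mult_blocks)

lemma self_adjoint_quadratic_form_real:
  fixes X :: "complex mat"
  assumes X: "X \<in> carrier_mat m m" and h: "mat_adjoint X = X" and v: "v \<in> carrier_vec m"
  shows "Im (conjugate v \<bullet> (X *\<^sub>v v)) = 0"
proof -
  let ?z = "conjugate v \<bullet> (X *\<^sub>v v)"
  have "cnj ?z = (\<Sum>i<m. \<Sum>j<m. cnj (v$j) * X$$(j,i) * v$i)"
    unfolding quadratic_form_sum[OF X v] cnj_sum
  proof (intro sum.cong refl)
    fix i j assume "i \<in> {..<m}" "j \<in> {..<m}"
    then show "cnj (cnj (v$i) * X$$(i,j) * v$j) = cnj (v$j) * X$$(j,i) * v$i"
      using self_adjoint_index[OF X h, of i j] by simp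
  qed
  also have "\<dots> = ?z"
    unfolding quadratic_form_sum[OF X v] by (rule sum.swap)
  finally have "cnj ?z = ?z" .
  from arg_cong[OF this, of Im] show ?thesis by simp
qed

lemma self_adjoint_of_blocks:
  fixes Y :: "complex mat"
  assumes Y: "Y \<in> carrier_mat (n*p) (n*p)"
    and h: "\<And>r s a b. r < n \<Longrightarrow> s < n \<Longrightarrow> a < p \<Longrightarrow> b < p \<Longrightarrow>
      Y $$ (s*p+b, r*p+a) = cnj (Y $$ (r*p+a, s*p+b))"
  shows "mat_adjoint Y = Y"
proof (rule eq_matI)
  fix i j assume "i < dim_row Y" "j < dim_col Y"
  then have i: "i < n*p" and j: "j < n*p" using Y by auto
  then have "0 < p" by (cases p) auto
  then have di: "i = (i div p)*p + i mod p" "i div p < n" "i mod p < p"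
    and dj: "j = (j div p)*p + j mod p" "j div p < n" "j mod p < p"
    using i j by (auto simp: less_mult_imp_div_less)
  have "Y $$ (i,j) = cnj (Y $$ (j,i))"
    using h[OF dj(2) di(2) dj(3) di(3)] di(1) dj(1) by simp
  then show "mat_adjoint Y $$ (i,j) = Y $$ (i,j)"
    using i j Y by (simp add: mat_adjoint_index conjugate_complex_def)
qed (use Y in auto)

section \<open>Compressions of positive block matrices\<close>

lemma sum_reorder4:
  "(\<Sum>r\<in>R. \<Sum>e\<in>E. \<Sum>s\<in>S. \<Sum>f\<in>F. g r e s f) = (\<Sum>e\<in>E. \<Sum>f\<in>F. \<Sum>r\<in>R. \<Sum>s\<in>S. g r e s f)"
proof -
  have "(\<Sum>r\<in>R. \<Sum>e\<in>E. \<Sum>s\<in>S. \<Sum>f\<in>F. g r e s f) = (\<Sum>r\<in>R. \<Sum>e\<in>E. \<Sum>f\<in>F. \<Sum>s\<in>S. g r e s f)"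
    by (intro sum.cong refl sum.swap)
  also have "\<dots> = (\<Sum>e\<in>E. \<Sum>r\<in>R. \<Sum>f\<in>F. \<Sum>s\<in>S. g r e s f)" by (rule sum.swap)
  also have "\<dots> = (\<Sum>e\<in>E. \<Sum>f\<in>F. \<Sum>r\<in>R. \<Sum>s\<in>S. g r e s f)"
    by (intro sum.cong refl sum.swap)
  finally show ?thesis .
qed

definition block_form ::
    "nat \<Rightarrow> nat \<Rightarrow> complex mat \<Rightarrow> (nat \<Rightarrow> nat \<Rightarrow> complex) \<Rightarrow> (nat \<Rightarrow> nat \<Rightarrow> complex) \<Rightarrow> complex" where
  "block_form n p X y z = (\<Sum>r<n. \<Sum>e<p. \<Sum>s<n. \<Sum>f<p. cnj (y r e) * X$$(r*p+e, s*p+f) * z s f)"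

lemma psd_block_form_nonneg:
  assumes "psd (n*p) X"
  shows "0 \<le> Re (block_form n p X y y)"
proof -
  define v where "v = vec (n*p) (\<lambda>i. y (i div p) (i mod p))"
  have X: "X \<in> carrier_mat (n*p) (n*p)" using assms unfolding psd_def by auto
  have v: "v \<in> carrier_vec (n*p)" unfolding v_def by auto
  have "v $ (r*p+e) = y r e" if "r < n" "e < p" for r e
    using block_index[OF that] unfolding v_def by simp
  then have "conjugate v \<bullet> (X *\<^sub>v v) = block_form n p X y y"
    unfolding quadratic_form_blocks[OF X v] block_form_def by simp
  then show ?thesis using assms v unfolding psd_def by metis
qed

lemma block_form_add:
  "block_form n p X (\<lambda>r e. y r e + z r e) (\<lambda>r e. y r e + z r e) =
    block_form n p X y y + block_form n p X y z + block_form n p X z y + block_form n p X z z"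
  unfolding block_form_def by (simp add: distrib_left distrib_right sum.distrib)

lemma block_form_single_columns:
  assumes "c < p" "d < p"
  shows "block_form n p X (\<lambda>r e. if e = c then V r else 0) (\<lambda>r e. if e = d then W r else 0)
    = (\<Sum>r<n. \<Sum>s<n. cnj (V r) * X$$(r*p+c, s*p+d) * W s)"
proof -
  have mult_if: "x * (if P then y else 0) = (if P then x * y else 0)"
    "(if P then y else 0) * x = (if P then y * x else 0)" for P and x y :: complex
    by simp_all
  have "block_form n p X (\<lambda>r e. if e = c then V r else 0) (\<lambda>r e. if e = d then W r else 0)
    = (\<Sum>r<n. \<Sum>e<p. if e = c then (\<Sum>s<n. cnj (V r) * X$$(r*p+c, s*p+d) * W s) else 0)"
    unfolding block_form_def by (intro sum.cong refl) (auto simp: mult_if sum.delta' assms)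
  then show ?thesis using assms by (simp add: sum.delta')
qed

text \<open>The entry at \<open>((a, c), (b, d))\<close> of \<open>(U \<otimes> 1)\<^sup>* X (U \<otimes> 1)\<close>, where \<open>U\<close> is the
  \<open>n \<times> p\<close> matrix with entries \<open>U r a\<close>.\<close>
definition compression ::
    "nat \<Rightarrow> nat \<Rightarrow> complex mat \<Rightarrow> (nat \<Rightarrow> nat \<Rightarrow> complex) \<Rightarrow> nat \<Rightarrow> nat \<Rightarrow> nat \<Rightarrow> nat \<Rightarrow> complex" where
  "compression n p X U a c b d = (\<Sum>r<n. \<Sum>s<n. cnj (U r a) * X$$(r*p+c, s*p+d) * U s b)"

lemma psd_compression_diag_nonneg:
  assumes "psd (n*p) X" "c < p"
  shows "0 \<le> Re (compression n p X U a c a c)"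
  using psd_block_form_nonneg[OF assms(1), of "\<lambda>r e. if e = c then U r a else 0"]
  unfolding block_form_single_columns[OF assms(2) assms(2)] compression_def .

lemma psd_compression_weighted_nonneg:
  fixes w :: "nat \<Rightarrow> real"
  assumes "psd (n*p) X"
  shows "0 \<le> Re (\<Sum>a<p. \<Sum>b<p. of_real (w a * w b) * compression n p X U a a b b)"
proof -
  have "block_form n p X (\<lambda>r e. of_real (w e) * U r e) (\<lambda>r e. of_real (w e) * U r e)
     = (\<Sum>e<p. \<Sum>f<p. \<Sum>r<n. \<Sum>s<n.
          cnj (of_real (w e) * U r e) * X$$(r*p+e, s*p+f) * (of_real (w f) * U s f))"
    unfolding block_form_def by (rule sum_reorder4)
  also have "\<dots> = (\<Sum>a<p. \<Sum>b<p. of_real (w a * w b) * compression n p X U a a b b)"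
    unfolding compression_def sum_distrib_left by (intro sum.cong refl) (simp add: algebra_simps)
  finally show ?thesis using psd_block_form_nonneg[OF assms] by metis
qed

lemma psd_compression_swap_bound:
  assumes "psd (n*p) X" "a < p" "b < p"
  shows "- (Re (compression n p X U a b a b) + Re (compression n p X U b a b a))
    \<le> Re (compression n p X U a b b a) + Re (compression n p X U b a a b)"
proof -
  let ?y = "\<lambda>r e. (if e = b then U r a else 0) + (if e = a then U r b else 0)"
  have "block_form n p X ?y ?y = compression n p X U a b a b + compression n p X U a b b a
      + compression n p X U b a a b + compression n p X U b a b a"
    unfolding block_form_add block_form_single_columns[OF assms(2,3)]
      block_form_single_columns[OF assms(3,2)] block_form_single_columns[OF assms(2,2)]
      block_form_single_columns[OF assms(3,3)] compression_def ..
  then show ?thesis using psd_block_form_nonneg[OF assms(1), of ?y] by simp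
qed

lemma ampl_carrier [simp]: "ampl n p \<phi> X \<in> carrier_mat (n*p) (n*p)"
  unfolding ampl_def by simp

lemma ampl_index:
  assumes "r < n" "s < n" "a < p" "b < p"
  shows "ampl n p \<phi> X $$ (r*p+a, s*p+b) = \<phi> (mat p p (\<lambda>(c,d). X $$ (r*p+c, s*p+d))) $$ (a,b)"
  using block_index[OF assms(1,3)] block_index[OF assms(2,4)] unfolding ampl_def by simp

lemma ntr_mat: "ntr p (mat p p f) = (\<Sum>c<p. f (c,c)) / of_nat p"
  unfolding ntr_def by simp

lemma gamma_carrier: "A \<in> carrier_mat p p \<Longrightarrow> gamma A t B \<in> carrier_mat p p"
  unfolding gamma_def delta_map_def schur_map_def by auto

lemma gamma_index:
  assumes "A \<in> carrier_mat p p" "a < p" "b < p"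
  shows "gamma A t B $$ (a,b) =
    of_real t * (if a = b then ntr p B else 0) + of_real (A$$(a,b)) * B$$(a,b)"
  using assms unfolding gamma_def delta_map_def schur_map_def by auto

lemma gamma_transpose_index:
  assumes "A \<in> carrier_mat p p" "a < p" "b < p"
  shows "(gamma A t B)\<^sup>T $$ (a,b) =
    of_real t * (if a = b then ntr p B else 0) + of_real (A$$(b,a)) * B$$(b,a)"
  using gamma_index[OF assms(1,3,2), of t B] carrier_matD[OF gamma_carrier[OF assms(1), of t B]]
    assms(2,3) by simp

lemma quadratic_form_delta_schur_blocks:
  fixes M :: "nat \<Rightarrow> nat \<Rightarrow> real" and f g :: "nat \<Rightarrow> nat \<Rightarrow> nat"
  assumes Y: "Y \<in> carrier_mat (n*p) (n*p)" and u: "u \<in> carrier_vec (n*p)"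
    and Y_blocks: "\<And>r s a b. r < n \<Longrightarrow> s < n \<Longrightarrow> a < p \<Longrightarrow> b < p \<Longrightarrow> Y $$ (r*p+a, s*p+b) =
      of_real t * (if a = b then (\<Sum>c<p. X $$ (r*p+c, s*p+c)) / of_nat p else 0)
      + of_real (M a b) * X $$ (r*p + f a b, s*p + g a b)"
  defines "U \<equiv> \<lambda>r a. u$(r*p+a)"
  shows "conjugate u \<bullet> (Y *\<^sub>v u) =
    of_real t / of_nat p * (\<Sum>a<p. \<Sum>c<p. compression n p X U a c a c)
    + (\<Sum>a<p. \<Sum>b<p. of_real (M a b) * compression n p X U a (f a b) b (g a b))"
proof -
  let ?D = "\<lambda>r a s b. if a = b
    then of_real t / of_nat p * (\<Sum>c<p. cnj (U r a) * X $$ (r*p+c, s*p+c) * U s a) else 0"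
  let ?S = "\<lambda>r a s b. cnj (U r a) * (of_real (M a b) * X $$ (r*p + f a b, s*p + g a b)) * U s b"
  have "conjugate u \<bullet> (Y *\<^sub>v u) = (\<Sum>r<n. \<Sum>a<p. \<Sum>s<n. \<Sum>b<p. cnj (U r a) *
      (of_real t * (if a = b then (\<Sum>c<p. X $$ (r*p+c, s*p+c)) / of_nat p else 0)
      + of_real (M a b) * X $$ (r*p + f a b, s*p + g a b)) * U s b)"
    unfolding quadratic_form_blocks[OF Y u] U_def by (intro sum.cong refl) (simp add: Y_blocks)
  also have "\<dots> = (\<Sum>r<n. \<Sum>a<p. \<Sum>s<n. \<Sum>b<p. ?D r a s b + ?S r a s b)"
    by (intro sum.cong refl)
      (simp add: distrib_left distrib_right sum_distrib_left sum_divide_distrib mult_ac)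
  also have "\<dots> = (\<Sum>r<n. \<Sum>a<p. \<Sum>s<n. \<Sum>b<p. ?D r a s b)
      + (\<Sum>r<n. \<Sum>a<p. \<Sum>s<n. \<Sum>b<p. ?S r a s b)"
    by (simp only: sum.distrib)
  finally have expand: "conjugate u \<bullet> (Y *\<^sub>v u) = (\<Sum>r<n. \<Sum>a<p. \<Sum>s<n. \<Sum>b<p. ?D r a s b)
      + (\<Sum>r<n. \<Sum>a<p. \<Sum>s<n. \<Sum>b<p. ?S r a s b)" .
  have "(\<Sum>r<n. \<Sum>a<p. \<Sum>s<n. \<Sum>b<p. ?D r a s b) = of_real t / of_nat p *
      (\<Sum>r<n. \<Sum>a<p. \<Sum>s<n. \<Sum>c<p. cnj (U r a) * X $$ (r*p+c, s*p+c) * U s a)"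
    by (simp add: sum.delta' sum_distrib_left)
  also have "(\<Sum>r<n. \<Sum>a<p. \<Sum>s<n. \<Sum>c<p. cnj (U r a) * X $$ (r*p+c, s*p+c) * U s a)
      = (\<Sum>a<p. \<Sum>c<p. compression n p X U a c a c)"
    unfolding compression_def by (rule sum_reorder4)
  finally have trace_part: "(\<Sum>r<n. \<Sum>a<p. \<Sum>s<n. \<Sum>b<p. ?D r a s b)
      = of_real t / of_nat p * (\<Sum>a<p. \<Sum>c<p. compression n p X U a c a c)" .
  have schur_part: "(\<Sum>r<n. \<Sum>a<p. \<Sum>s<n. \<Sum>b<p. ?S r a s b)
      = (\<Sum>a<p. \<Sum>b<p. of_real (M a b) * compression n p X U a (f a b) b (g a b))"
    unfolding compression_def sum_distrib_left
    by (subst sum_reorder4) (intro sum.cong refl, simp add: ac_simps)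
  show ?thesis unfolding expand trace_part schur_part ..
qed

lemma quadratic_form_ampl_gamma:
  assumes "A \<in> carrier_mat p p" "u \<in> carrier_vec (n*p)"
  defines "U \<equiv> \<lambda>r a. u$(r*p+a)"
  shows "conjugate u \<bullet> (ampl n p (gamma A t) X *\<^sub>v u) =
    of_real t / of_nat p * (\<Sum>a<p. \<Sum>c<p. compression n p X U a c a c)
    + (\<Sum>a<p. \<Sum>b<p. of_real (A$$(a,b)) * compression n p X U a a b b)"
  unfolding U_def
  by (rule quadratic_form_delta_schur_blocks[where f="\<lambda>a b. a" and g="\<lambda>a b. b", OF _ assms(2)])
    (simp_all add: ampl_index gamma_index[OF assms(1)] ntr_mat)

lemma quadratic_form_ampl_gamma_transpose:
  assumes "A \<in> carrier_mat p p" "u \<in> carrier_vec (n*p)"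
  defines "U \<equiv> \<lambda>r a. u$(r*p+a)"
  shows "conjugate u \<bullet> (ampl n p (\<lambda>B. (gamma A t B)\<^sup>T) X *\<^sub>v u) =
    of_real t / of_nat p * (\<Sum>a<p. \<Sum>c<p. compression n p X U a c a c)
    + (\<Sum>a<p. \<Sum>b<p. of_real (A$$(b,a)) * compression n p X U a b b a)"
  unfolding U_def
  by (rule quadratic_form_delta_schur_blocks[where f="\<lambda>a b. b" and g="\<lambda>a b. a", OF _ assms(2)])
    (simp_all add: ampl_index gamma_transpose_index[OF assms(1)] ntr_mat)

lemma psdI:
  fixes Y :: "complex mat"
  assumes Y: "Y \<in> carrier_mat m m" and h: "mat_adjoint Y = Y"
    and nonneg: "\<And>v. v \<in> carrier_vec m \<Longrightarrow> 0 \<le> Re (conjugate v \<bullet> (Y *\<^sub>v v))"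
  shows "psd m Y"
  unfolding psd_def using Y h nonneg self_adjoint_quadratic_form_real[OF Y h] by blast

lemma psd_self_adjoint: "psd m X \<Longrightarrow> X \<in> carrier_mat m m \<and> mat_adjoint X = X"
  unfolding psd_def by blast

lemma ampl_self_adjoint:
  assumes \<phi>: "\<And>B. B \<in> carrier_mat p p \<Longrightarrow> \<phi> (mat_adjoint B) = mat_adjoint (\<phi> B)"
    and \<phi>_carrier: "\<And>B. B \<in> carrier_mat p p \<Longrightarrow> \<phi> B \<in> carrier_mat p p"
    and X: "X \<in> carrier_mat (n*p) (n*p)" "mat_adjoint X = X"
  shows "mat_adjoint (ampl n p \<phi> X) = ampl n p \<phi> X"
proof (rule self_adjoint_of_blocks[OF ampl_carrier])
  fix r s a b assume rs: "r < n" "s < n" and ab: "a < p" "b < p"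
  let ?B = "\<lambda>r s. mat p p (\<lambda>(c,d). X $$ (r*p+c, s*p+d))"
  have "X $$ (s*p+c, r*p+d) = cnj (X $$ (r*p+d, s*p+c))" if "c < p" "d < p" for c d
    using self_adjoint_index[OF X block_index(1)[OF rs(1) that(2)] block_index(1)[OF rs(2) that(1)]] .
  then have "?B s r = mat_adjoint (?B r s)"
    by (intro eq_matI) (auto simp: mat_adjoint_index conjugate_complex_def)
  then have "\<phi> (?B s r) $$ (b,a) = cnj (\<phi> (?B r s) $$ (a,b))"
    using ab \<phi>_carrier[of "?B r s"] by (simp add: \<phi> mat_adjoint_index conjugate_complex_def)
  then show "ampl n p \<phi> X $$ (s*p+b, r*p+a) = cnj (ampl n p \<phi> X $$ (r*p+a, s*p+b))"
    using rs ab by (simp add: ampl_index)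
qed

lemma symmetric_index: "A \<in> carrier_mat p p \<Longrightarrow> A\<^sup>T = A \<Longrightarrow> i < p \<Longrightarrow> j < p \<Longrightarrow> A$$(i,j) = A$$(j,i)"
  by (metis carrier_matD index_transpose_mat(1))

lemma gamma_mat_adjoint:
  assumes A: "A \<in> carrier_mat p p" "A\<^sup>T = A" and B: "B \<in> carrier_mat p p"
  shows "gamma A t (mat_adjoint B) = mat_adjoint (gamma A t B)"
proof -
  have "ntr p (mat_adjoint B) = cnj (ntr p B)"
    using B by (simp add: ntr_def mat_adjoint_index conjugate_complex_def)
  moreover have "gamma A t (mat_adjoint B) \<in> carrier_mat p p" "gamma A t B \<in> carrier_mat p p"
    using gamma_carrier[OF A(1)] by blast+
  ultimately show ?thesis
    using A B by (intro eq_matI)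
      (auto simp: gamma_index mat_adjoint_index conjugate_complex_def symmetric_index)
qed

lemma transpose_mat_adjoint: "(mat_adjoint M)\<^sup>T = mat_adjoint (M\<^sup>T)"
  by (intro eq_matI) (auto simp: mat_adjoint_index)

lemma ampl_gamma_self_adjoint:
  assumes "A \<in> carrier_mat p p" "A\<^sup>T = A" "psd (n*p) X"
  shows "mat_adjoint (ampl n p (gamma A t) X) = ampl n p (gamma A t) X"
  using assms by (intro ampl_self_adjoint gamma_mat_adjoint gamma_carrier) (auto dest: psd_self_adjoint)

lemma ampl_gamma_transpose_self_adjoint:
  assumes "A \<in> carrier_mat p p" "A\<^sup>T = A" "psd (n*p) X"
  shows "mat_adjoint (ampl n p (\<lambda>B. (gamma A t B)\<^sup>T) X) = ampl n p (\<lambda>B. (gamma A t B)\<^sup>T) X"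
  using assms
  by (intro ampl_self_adjoint) (auto simp: gamma_mat_adjoint transpose_mat_adjoint
      intro: gamma_carrier dest: psd_self_adjoint)

section \<open>Real quadratic forms\<close>

definition quad_form :: "nat \<Rightarrow> (nat \<Rightarrow> nat \<Rightarrow> real) \<Rightarrow> (nat \<Rightarrow> real) \<Rightarrow> real" where
  "quad_form p N x = (\<Sum>i<p. \<Sum>j<p. N i j * x i * x j)"

definition sq_norm :: "nat \<Rightarrow> (nat \<Rightarrow> real) \<Rightarrow> real" where
  "sq_norm p x = (\<Sum>i<p. (x i)^2)"

lemma sq_norm_nonneg: "0 \<le> sq_norm p x"
  unfolding sq_norm_def by (simp add: sum_nonneg)

lemma sq_norm_eq_0: "sq_norm p x = 0 \<Longrightarrow> i < p \<Longrightarrow> x i = 0"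
  unfolding sq_norm_def by (subst (asm) sum_nonneg_eq_0_iff) auto

lemma sum_unit_vec:
  fixes k p :: nat
  assumes "k < p"
  shows "(\<Sum>j<p. f j * (if j = k then 1 else 0)) = (f k :: real)"
proof -
  have "(\<Sum>j<p. f j * (if j = k then 1 else 0)) = (\<Sum>j<p. if j = k then f j else 0)"
    by (intro sum.cong) auto
  also have "\<dots> = f k" using assms by simp
  finally show ?thesis .
qed

lemma quad_form_id: "quad_form p (\<lambda>i j. if i = j then 1 else 0) x = sq_norm p x"
proof -
  have "(\<Sum>j<p. (if i = j then 1 else 0) * x i * x j) = (x i)^2" if "i < p" for i
    using sum_unit_vec[OF that, of "\<lambda>j. x i * x j"] that
    by (simp add: power2_eq_square ac_simps eq_commute[of i])
  then show ?thesis unfolding quad_form_def sq_norm_def by simp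
qed

lemma quad_form_unit_vec:
  assumes "k < p"
  shows "quad_form p N (\<lambda>i. if i = k then 1 else 0) = N k k"
proof -
  have "(\<Sum>j<p. N i j * (if i = k then 1 else 0) * (if j = k then 1 else 0))
      = (if i = k then N k k else 0)" for i
    using sum_unit_vec[OF assms, of "N k"] by (cases "i = k") simp_all
  then show ?thesis unfolding quad_form_def using assms by simp
qed

lemma quad_form_scale: "quad_form p N (\<lambda>i. c * x i) = c^2 * quad_form p N x"
  unfolding quad_form_def sum_distrib_left power2_eq_square
  by (intro sum.cong refl) (simp add: ac_simps)

lemma sq_norm_scale: "sq_norm p (\<lambda>i. c * x i) = c^2 * sq_norm p x"
  unfolding sq_norm_def sum_distrib_left by (simp add: power_mult_distrib)

lemma quad_form_add_unit_vec:
  assumes sym: "\<And>i j. i < p \<Longrightarrow> j < p \<Longrightarrow> N i j = N j i" and k: "k < p"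
  shows "quad_form p N (\<lambda>i. x i + (if i = k then s else 0))
    = quad_form p N x + 2 * s * (\<Sum>j<p. N k j * x j) + s^2 * N k k"
proof -
  have "quad_form p N (\<lambda>i. x i + (if i = k then s else 0)) = quad_form p N x
      + (\<Sum>i<p. \<Sum>j<p. if i = k then s * (N k j * x j) else 0)
      + (\<Sum>i<p. \<Sum>j<p. if j = k then s * (N k i * x i) else 0)
      + (\<Sum>i<p. \<Sum>j<p. if j = k then if i = k then s^2 * N k k else 0 else 0)"
    unfolding quad_form_def sum.distrib[symmetric]
    by (intro sum.cong refl) (auto simp: algebra_simps power2_eq_square sym k)
  moreover have "(\<Sum>i<p. \<Sum>j<p. if i = k then s * (N k j * x j) else 0) = s * (\<Sum>j<p. N k j * x j)"
    using k by (subst sum.swap) (simp add: sum_distrib_left)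
  moreover have "(\<Sum>i<p. \<Sum>j<p. if j = k then s * (N k i * x i) else 0) = s * (\<Sum>j<p. N k j * x j)"
    using k by (simp add: sum_distrib_left)
  moreover have "(\<Sum>i<p. \<Sum>j<p. if j = k then if i = k then s^2 * N k k else 0 else 0) = s^2 * N k k"
    using k by simp
  ultimately show ?thesis by simp
qed

lemma quad_form_minus_outer:
  "quad_form p (\<lambda>i j. N i j - c * v i * v j) x = quad_form p N x - c * (\<Sum>i<p. v i * x i)^2"
proof -
  have "(\<Sum>i<p. v i * x i)^2 = (\<Sum>i<p. \<Sum>j<p. v i * v j * x i * x j)"
    unfolding power2_eq_square sum_product by (intro sum.cong refl) (simp add: algebra_simps)
  then show ?thesis
    unfolding quad_form_def by (simp add: algebra_simps sum_subtractf sum_distrib_left)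
qed

lemma quad_form_minus_diag:
  "quad_form p (\<lambda>i j. N i j - (if i = j then c else 0)) x = quad_form p N x - c * sq_norm p x"
proof -
  have "quad_form p (\<lambda>i j. N i j - (if i = j then c else 0)) x
      = quad_form p N x - c * quad_form p (\<lambda>i j. if i = j then 1 else 0) x"
    unfolding quad_form_def sum_distrib_left sum_subtractf[symmetric]
    by (intro sum.cong refl) (auto simp: algebra_simps)
  then show ?thesis unfolding quad_form_id .
qed

lemma affine_nonneg_imp_slope_zero:
  fixes a b :: real
  assumes "\<And>s. 0 \<le> a + s * b"
  shows "b = 0"
proof (rule ccontr)
  assume "b \<noteq> 0"
  then have "a + (- (\<bar>a\<bar> + 1) / b) * b = a - (\<bar>a\<bar> + 1)" by simp
  then show False using assms[of "- (\<bar>a\<bar> + 1) / b"] by linarith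
qed

lemma quadratic_nonneg_imp_slope_zero:
  fixes b d :: real
  assumes "\<And>s. 0 \<le> s * b + s^2 * d"
  shows "b = 0"
proof (rule ccontr)
  assume "b \<noteq> 0"
  define e where "e = 1 / (2 * (\<bar>d\<bar> + 1))"
  have e: "0 < e" "e * \<bar>d\<bar> \<le> 1 / 2" unfolding e_def by (auto simp: field_simps)
  have "(- (e*b))^2 * d \<le> (e*b)^2 * \<bar>d\<bar>" by (simp add: mult_left_mono)
  also have "\<dots> = e * b^2 * (e * \<bar>d\<bar>)" by (simp add: power2_eq_square)
  also have "\<dots> \<le> e * b^2 * (1 / 2)" using e by (intro mult_left_mono) auto
  finally have "- (e*b) * b + (- (e*b))^2 * d \<le> - (e * b^2 / 2)" by (simp add: power2_eq_square)
  moreover have "0 < e * b^2" using e \<open>b \<noteq> 0\<close> by simp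
  ultimately show False using assms[of "- (e*b)"] by linarith
qed

lemma psd_diag_zero_imp_row_zero:
  assumes sym: "\<And>i j. i < p \<Longrightarrow> j < p \<Longrightarrow> N i j = N j i"
    and psd: "\<And>x. 0 \<le> quad_form p N x"
    and k: "k < p" "N k k = 0" and j: "j < p"
  shows "N k j = 0"
proof -
  have "0 \<le> N j j + s * (2 * N k j)" for s
  proof -
    have "0 \<le> quad_form p N (\<lambda>i. (if i = j then 1 else 0) + (if i = k then s else 0))"
      by (rule psd)
    also have "\<dots> = N j j + s * (2 * N k j)"
      using quad_form_add_unit_vec[of p N, OF sym k(1)] quad_form_unit_vec[OF j]
        sum_unit_vec[OF j, of "N k"] k(2)
      by simp
    finally show ?thesis .
  qed
  then have "2 * N k j = 0" by (rule affine_nonneg_imp_slope_zero)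
  then show ?thesis by simp
qed

lemma psd_pivot_complement:
  assumes sym: "\<And>i j. i < p \<Longrightarrow> j < p \<Longrightarrow> N i j = N j i"
    and psd: "\<And>x. 0 \<le> quad_form p N x"
    and k: "k < p" "0 < N k k"
  shows "0 \<le> quad_form p (\<lambda>i j. N i j - 1 / N k k * N i k * N j k) x"
proof -
  define T where "T = (\<Sum>j<p. N k j * x j)"
  have "(\<Sum>i<p. N i k * x i) = T"
    unfolding T_def using sym k by (intro sum.cong) auto
  then have "quad_form p (\<lambda>i j. N i j - 1 / N k k * N i k * N j k) x = quad_form p N x - T^2 / N k k"
    unfolding quad_form_minus_outer by simp
  also have "\<dots> = quad_form p N (\<lambda>i. x i + (if i = k then - T / N k k else 0))"
    using quad_form_add_unit_vec[of p N k x "- T / N k k", OF sym k(1)] k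
    unfolding T_def[symmetric] by (simp add: field_simps power2_eq_square)
  finally show ?thesis using psd by simp
qed

text \<open>One step of a Cholesky factorisation. With \<open>N k k = 0\<close> the junk value \<open>x / 0 = 0\<close>
  makes \<open>v = 0\<close>, which is right because row \<open>k\<close> then vanishes.\<close>
lemma psd_pivot_step:
  assumes sym: "\<And>i j. i < p \<Longrightarrow> j < p \<Longrightarrow> N i j = N j i"
    and psd: "\<And>x. 0 \<le> quad_form p N x"
    and k: "k < p"
    and vanish: "\<And>i j. i < p \<Longrightarrow> j < p \<Longrightarrow> i < k \<or> j < k \<Longrightarrow> N i j = 0"
  obtains v where "\<And>x. 0 \<le> quad_form p (\<lambda>i j. N i j - v i * v j) x"
    and "\<And>i j. i < p \<Longrightarrow> j < p \<Longrightarrow> i < Suc k \<or> j < Suc k \<Longrightarrow> N i j - v i * v j = 0"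
proof -
  define v where "v i = N i k / sqrt (N k k)" for i
  have "0 \<le> N k k" using psd[of "\<lambda>i. if i = k then 1 else 0"] quad_form_unit_vec[OF k] by simp
  then consider (zero) "N k k = 0" | (pos) "0 < N k k" by linarith
  then show ?thesis
  proof cases
    case zero
    have row: "N k j = 0" "N j k = 0" if "j < p" for j
      using psd_diag_zero_imp_row_zero[OF sym psd k zero that] sym[OF k that] by auto
    show ?thesis
    proof (rule that[of v])
      show "0 \<le> quad_form p (\<lambda>i j. N i j - v i * v j) x" for x
        using psd zero by (simp add: v_def)
      show "N i j - v i * v j = 0" if "i < p" "j < p" "i < Suc k \<or> j < Suc k" for i j
        using that vanish[of i j] row zero by (auto simp: v_def less_Suc_eq)
    qed
  next
    case pos
    then have vv: "v i * v j = 1 / N k k * N i k * N j k" for i j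
      unfolding v_def by (simp add: real_sqrt_mult[symmetric])
    show ?thesis
    proof (rule that[of v])
      show "0 \<le> quad_form p (\<lambda>i j. N i j - v i * v j) x" for x
        unfolding vv by (rule psd_pivot_complement[OF sym psd k pos])
      show "N i j - v i * v j = 0" if "i < p" "j < p" "i < Suc k \<or> j < Suc k" for i j
        using that vanish[of i j] vanish[of i k] vanish[of j k] sym[of i k] sym[of j k] k pos
        unfolding vv by (auto simp: less_Suc_eq)
    qed
  qed
qed

lemma psd_sum_of_squares_from:
  assumes "k \<le> p"
    and "\<And>i j. i < p \<Longrightarrow> j < p \<Longrightarrow> N i j = N j i"
    and "\<And>x. 0 \<le> quad_form p N x"
    and "\<And>i j. i < p \<Longrightarrow> j < p \<Longrightarrow> i < k \<or> j < k \<Longrightarrow> N i j = 0"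
  shows "\<exists>c. \<forall>i<p. \<forall>j<p. N i j = (\<Sum>l\<in>{k..<p}. c l i * c l j)"
  using assms
proof (induction "p - k" arbitrary: k N)
  case 0
  then show ?case by auto
next
  case (Suc d)
  then have k: "k < p" by simp
  obtain v where psd': "\<And>x. 0 \<le> quad_form p (\<lambda>i j. N i j - v i * v j) x"
    and vanish': "\<And>i j. i < p \<Longrightarrow> j < p \<Longrightarrow> i < Suc k \<or> j < Suc k \<Longrightarrow> N i j - v i * v j = 0"
    using psd_pivot_step[of p N k] Suc.prems k by blast
  have "\<exists>c. \<forall>i<p. \<forall>j<p. N i j - v i * v j = (\<Sum>l\<in>{Suc k..<p}. c l i * c l j)"
    using Suc.hyps(1)[of "Suc k"] Suc.hyps(2) Suc.prems(2) k psd' vanish'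
    by (simp add: mult.commute)
  then obtain c where c: "\<forall>i<p. \<forall>j<p. N i j - v i * v j = (\<Sum>l\<in>{Suc k..<p}. c l i * c l j)"
    by blast
  have "N i j = (\<Sum>l\<in>{k..<p}. (c(k := v)) l i * (c(k := v)) l j)" if "i < p" "j < p" for i j
    using c that k by (simp add: sum.atLeast_Suc_lessThan algebra_simps)
  then show ?case by blast
qed

lemma psd_sum_of_squares:
  assumes "\<And>i j. i < p \<Longrightarrow> j < p \<Longrightarrow> N i j = N j i" "\<And>x. 0 \<le> quad_form p N x"
  obtains c where "\<And>i j. i < p \<Longrightarrow> j < p \<Longrightarrow> N i j = (\<Sum>l<p. c l i * c l j)"
  using psd_sum_of_squares_from[of 0 p N] assms by (auto simp: atLeast0LessThan)

section \<open>The least eigenvalue as a minimal Rayleigh quotient\<close>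

lemma quad_form_cong: "(\<And>i. i < p \<Longrightarrow> x i = y i) \<Longrightarrow> quad_form p N x = quad_form p N y"
  unfolding quad_form_def by simp

lemma sq_norm_cong: "(\<And>i. i < p \<Longrightarrow> x i = y i) \<Longrightarrow> sq_norm p x = sq_norm p y"
  unfolding sq_norm_def by simp

lemma quad_form_attains_min_on_sphere:
  assumes p: "0 < p"
  obtains x0 where "sq_norm p x0 = 1" "\<And>y. sq_norm p y = 1 \<Longrightarrow> quad_form p N x0 \<le> quad_form p N y"
proof -
  define box where "box = (\<lambda>i::nat. if i < p then {-1..1::real} else {0})"
  define K where "K = Pi UNIV box \<inter> {x. sq_norm p x = 1}"
  have "compactin (product_topology (\<lambda>i. euclidean) UNIV) (PiE UNIV box)"
    unfolding compactin_PiE box_def by auto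
  then have "compact (Pi UNIV box)"
    unfolding euclidean_product_topology PiE_UNIV_domain by simp
  moreover have "closed {x. sq_norm p x = 1}"
    unfolding sq_norm_def by (intro closed_Collect_eq continuous_intros continuous_on_product_coordinates)
  ultimately have "compact K" unfolding K_def by blast
  have "sq_norm p (\<lambda>i. if i = 0 then 1 else 0) = 1"
    using quad_form_unit_vec[OF p, of "\<lambda>i j. if i = j then 1 else 0"] unfolding quad_form_id by simp
  then have "(\<lambda>i. if i = 0 then 1 else 0) \<in> K" unfolding K_def box_def using p by auto
  then have "K \<noteq> {}" by blast
  have "continuous_on K (quad_form p N)"
    unfolding quad_form_def
    by (intro continuous_intros continuous_on_subset[OF continuous_on_product_coordinates] subset_UNIV)
  then obtain x0 where x0: "x0 \<in> K" and min: "\<And>y. y \<in> K \<Longrightarrow> quad_form p N x0 \<le> quad_form p N y"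
    using continuous_attains_inf[OF \<open>compact K\<close> \<open>K \<noteq> {}\<close>] by blast
  show ?thesis
  proof (rule that)
    show "sq_norm p x0 = 1" using x0 unfolding K_def by simp
    fix y assume y: "sq_norm p y = 1"
    define y' where "y' i = (if i < p then y i else 0)" for i
    have "(y' i)^2 \<le> sq_norm p y'" if "i < p" for i
      unfolding sq_norm_def using that by (intro member_le_sum) auto
    moreover have "sq_norm p y' = 1" using y sq_norm_cong[of p y' y] unfolding y'_def by simp
    ultimately have "y' \<in> K"
      unfolding K_def box_def by (auto simp: y'_def abs_square_le_1 abs_le_iff)
    moreover have "quad_form p N y' = quad_form p N y"
      by (rule quad_form_cong) (simp add: y'_def)
    ultimately show "quad_form p N x0 \<le> quad_form p N y"
      using min by metis
  qed
qed

lemma rayleigh_min_exists: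
  assumes "0 < p"
  obtains x0 where "sq_norm p x0 = 1" "\<And>x. quad_form p N x0 * sq_norm p x \<le> quad_form p N x"
proof -
  obtain x0 where x0: "sq_norm p x0 = 1"
    and min: "\<And>y. sq_norm p y = 1 \<Longrightarrow> quad_form p N x0 \<le> quad_form p N y"
    using quad_form_attains_min_on_sphere[OF assms] by blast
  have "quad_form p N x0 * sq_norm p x \<le> quad_form p N x" for x
  proof (cases "sq_norm p x = 0")
    case True
    then show ?thesis
      using quad_form_cong[of p x "\<lambda>_. 0" N] sq_norm_eq_0 by (simp add: quad_form_def)
  next
    case False
    then have pos: "0 < sq_norm p x" using sq_norm_nonneg[of p x] by simp
    define c where "c = 1 / sqrt (sq_norm p x)"
    have c2: "c^2 = 1 / sq_norm p x" unfolding c_def using pos by (simp add: power_divide)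
    then have "quad_form p N x0 \<le> quad_form p N x / sq_norm p x"
      using min[of "\<lambda>i. c * x i"] pos unfolding quad_form_scale sq_norm_scale by simp
    then show ?thesis using pos by (simp add: field_simps)
  qed
  then show ?thesis using that x0 by blast
qed

lemma rayleigh_min_eigen:
  assumes sym: "\<And>i j. i < p \<Longrightarrow> j < p \<Longrightarrow> N i j = N j i"
    and n0: "sq_norm p x0 = 1"
    and min: "\<And>x. quad_form p N x0 * sq_norm p x \<le> quad_form p N x"
    and k: "k < p"
  shows "(\<Sum>j<p. N k j * x0 j) = quad_form p N x0 * x0 k"
proof -
  let ?m = "quad_form p N x0"
  have "0 \<le> s * (2 * ((\<Sum>j<p. N k j * x0 j) - ?m * x0 k)) + s^2 * (N k k - ?m)" for s
  proof -
    let ?y = "\<lambda>i. x0 i + (if i = k then s else 0)"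
    have "sq_norm p ?y = 1 + 2 * s * x0 k + s^2"
      using quad_form_add_unit_vec[of p "\<lambda>i j. if i = j then 1 else 0" k x0 s] k n0
        sum_unit_vec[OF k, of x0]
      by (simp add: quad_form_id mult.commute)
    moreover have "quad_form p N ?y = ?m + 2 * s * (\<Sum>j<p. N k j * x0 j) + s^2 * N k k"
      by (rule quad_form_add_unit_vec[of p N, OF sym k])
    ultimately show ?thesis using min[of ?y] by (simp add: algebra_simps)
  qed
  then have "2 * ((\<Sum>j<p. N k j * x0 j) - ?m * x0 k) = 0"
    by (rule quadratic_nonneg_imp_slope_zero)
  then show ?thesis by simp
qed

lemma mult_mat_vec_vec_index:
  assumes "A \<in> carrier_mat p p" "k < p"
  shows "(A *\<^sub>v vec p x) $ k = (\<Sum>j<p. A$$(k,j) * x j)"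
  using assms by (auto simp: scalar_prod_def lessThan_atLeast0 intro!: sum.cong)

lemma finite_eigenvalues:
  fixes A :: "'a :: field mat"
  assumes "A \<in> carrier_mat n n"
  shows "finite {k. eigenvalue A k}"
proof -
  have "char_poly A \<noteq> 0" using degree_monic_char_poly[OF assms] by auto
  then show ?thesis unfolding eigenvalue_root_char_poly[OF assms] by (rule poly_roots_finite)
qed

lemma eigenvalue_of_coords:
  assumes A: "A \<in> carrier_mat p p" and x: "sq_norm p x \<noteq> 0"
    and ev: "\<And>k. k < p \<Longrightarrow> (\<Sum>j<p. A$$(k,j) * x j) = m * x k"
  shows "eigenvalue A m"
  unfolding eigenvalue_def eigenvector_def
proof (intro exI conjI)
  show "vec p x \<in> carrier_vec (dim_row A)" using A by simp
  show "vec p x \<noteq> 0\<^sub>v (dim_row A)"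
  proof
    assume "vec p x = 0\<^sub>v (dim_row A)"
    then have "x i = 0" if "i < p" for i
      using A that by (metis carrier_matD(1) index_vec index_zero_vec(1))
    then have "sq_norm p x = 0" unfolding sq_norm_def by simp
    then show False using x by simp
  qed
  show "A *\<^sub>v vec p x = m \<cdot>\<^sub>v vec p x"
  proof (rule eq_vecI)
    fix i assume "i < dim_vec (m \<cdot>\<^sub>v vec p x)"
    then have i: "i < p" by simp
    show "(A *\<^sub>v vec p x) $ i = (m \<cdot>\<^sub>v vec p x) $ i"
      unfolding mult_mat_vec_vec_index[OF A i] ev[OF i] using i by simp
  qed (use A in simp)
qed

lemma eigenvalue_ge_rayleigh_bound:
  assumes A: "A \<in> carrier_mat p p"
    and bound: "\<And>x. m * sq_norm p x \<le> quad_form p (\<lambda>i j. A$$(i,j)) x"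
    and "eigenvalue A k"
  shows "m \<le> k"
proof -
  obtain w where "eigenvector A w k" using assms(3) unfolding eigenvalue_def by blast
  then have w: "w \<in> carrier_vec p" "w \<noteq> 0\<^sub>v p" and Aw: "A *\<^sub>v w = k \<cdot>\<^sub>v w"
    unfolding eigenvector_def using A by auto
  define y where "y i = w $ i" for i
  have wy: "w = vec p y" using w(1) unfolding y_def by auto
  have "0 < sq_norm p y"
  proof (rule ccontr)
    assume "\<not> 0 < sq_norm p y"
    then have "sq_norm p y = 0" using sq_norm_nonneg[of p y] by simp
    then have "w = 0\<^sub>v p" unfolding wy using sq_norm_eq_0 by auto
    then show False using w(2) by simp
  qed
  moreover have "quad_form p (\<lambda>i j. A$$(i,j)) y = k * sq_norm p y"
  proof -
    have "(\<Sum>j<p. A$$(i,j) * y j) = k * y i" if "i < p" for i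
      using arg_cong[OF Aw, of "\<lambda>v. v $ i"] mult_mat_vec_vec_index[OF A that, of y] that w(1)
      unfolding wy by simp
    then show ?thesis unfolding quad_form_def sq_norm_def sum_distrib_left power2_eq_square
      by (intro sum.cong refl) (simp add: ac_simps flip: sum_distrib_left)
  qed
  ultimately show ?thesis using bound[of y] by simp
qed

lemma lambda_min_rayleigh:
  assumes A: "A \<in> carrier_mat p p" "A\<^sup>T = A" and p: "0 < p"
  obtains x0 where "sq_norm p x0 = 1" "quad_form p (\<lambda>i j. A$$(i,j)) x0 = lambda_min A"
    "\<And>x. lambda_min A * sq_norm p x \<le> quad_form p (\<lambda>i j. A$$(i,j)) x"
proof -
  let ?N = "\<lambda>i j. A$$(i,j)"
  obtain x0 where n0: "sq_norm p x0 = 1" and min: "\<And>x. quad_form p ?N x0 * sq_norm p x \<le> quad_form p ?N x"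
    using rayleigh_min_exists[OF p] by blast
  have "eigenvalue A (quad_form p ?N x0)"
  proof (rule eigenvalue_of_coords[OF A(1)])
    show "sq_norm p x0 \<noteq> 0" using n0 by simp
    show "(\<Sum>j<p. A$$(k,j) * x0 j) = quad_form p ?N x0 * x0 k" if "k < p" for k
      using rayleigh_min_eigen[of p ?N, OF symmetric_index[OF A] n0 min that] by simp
  qed
  then have "lambda_min A = quad_form p ?N x0"
    unfolding lambda_min_def using eigenvalue_ge_rayleigh_bound[OF A(1) min]
    by (intro Min_eqI finite_eigenvalues[OF A(1)]) auto
  then show ?thesis using that n0 min by simp
qed

lemma adjacency_rayleigh_bound_le:
  assumes adj: "adjacency_matrix p A" and nz: "A \<noteq> 0\<^sub>m p p"
    and bound: "\<And>x. m * sq_norm p x \<le> quad_form p (\<lambda>i j. A$$(i,j)) x"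
  shows "m \<le> -1"
proof -
  have A: "A \<in> carrier_mat p p" "A\<^sup>T = A" using adj unfolding adjacency_matrix_def by auto
  obtain i j where ij: "i < p" "j < p" "A$$(i,j) \<noteq> 0"
    using A(1) nz by (metis eq_matI carrier_matD index_zero_mat(1) index_zero_mat(2,3))
  then have "A$$(i,j) = 1" "i \<noteq> j" "A$$(j,i) = 1" "A$$(j,j) = 0"
    using adj symmetric_index[OF A ij(1,2)] unfolding adjacency_matrix_def by auto
  moreover define x where "x l = (if l = i then 1 else 0) + (if l = j then -1 else (0::real))" for l
  ultimately have "quad_form p (\<lambda>a b. A$$(a,b)) x = -2" "sq_norm p x = 2"
    using quad_form_add_unit_vec[of p "\<lambda>a b. A$$(a,b)", OF symmetric_index[OF A] ij(2)]
      quad_form_add_unit_vec[of p "\<lambda>a b. if a = b then 1 else 0", OF _ ij(2)]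
      quad_form_unit_vec[OF ij(1)] sum_unit_vec[OF ij(1)] adj ij
    unfolding x_def adjacency_matrix_def quad_form_id[symmetric] by auto
  then show ?thesis using bound[of x] by simp
qed

section \<open>Positivity of the amplifications\<close>

lemma Re_of_real_div_of_nat_mult: "Re (of_real t / of_nat p * z) = t / real p * Re z"
proof -
  have "of_real t / of_nat p = complex_of_real (t / real p)" by simp
  then show ?thesis by simp
qed

lemma psd_schur_compression_lower_bound:
  fixes A :: "real mat"
  assumes A: "A \<in> carrier_mat p p" "A\<^sup>T = A"
    and bound: "\<And>x. lam * sq_norm p x \<le> quad_form p (\<lambda>i j. A$$(i,j)) x"
    and X: "psd (n*p) X"
  shows "lam * (\<Sum>a<p. Re (compression n p X U a a a a))
    \<le> Re (\<Sum>a<p. \<Sum>b<p. of_real (A$$(a,b)) * compression n p X U a a b b)"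
proof -
  define R where "R a b = Re (compression n p X U a a b b)" for a b
  let ?N = "\<lambda>i j. A$$(i,j) - (if i = j then lam else 0)"
  have "?N i j = ?N j i" if "i < p" "j < p" for i j
    using symmetric_index[OF A that] by simp
  moreover have "0 \<le> quad_form p ?N x" for x
    unfolding quad_form_minus_diag using bound[of x] by simp
  ultimately obtain c where c: "\<And>a b. a < p \<Longrightarrow> b < p \<Longrightarrow> ?N a b = (\<Sum>l<p. c l a * c l b)"
    using psd_sum_of_squares[of p ?N] by blast
  let ?g = "\<lambda>l a b. c l a * c l b * R a b"
  have "Re (\<Sum>a<p. \<Sum>b<p. of_real (A$$(a,b)) * compression n p X U a a b b)
      = (\<Sum>a<p. \<Sum>b<p. (\<Sum>l<p. ?g l a b) + (if a = b then lam * R a a else 0))"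
  proof (unfold Re_sum, intro sum.cong refl)
    fix a b assume "a \<in> {..<p}" "b \<in> {..<p}"
    then have "A$$(a,b) = (\<Sum>l<p. c l a * c l b) + (if a = b then lam else 0)"
      using c[of a b] by simp
    then show "Re (of_real (A$$(a,b)) * compression n p X U a a b b)
        = (\<Sum>l<p. ?g l a b) + (if a = b then lam * R a a else 0)"
      by (simp add: R_def sum_distrib_right distrib_right)
  qed
  also have "\<dots> = (\<Sum>a<p. \<Sum>b<p. \<Sum>l<p. ?g l a b) + lam * (\<Sum>a<p. R a a)"
    by (simp add: sum.distrib sum_distrib_left)
  also have "(\<Sum>a<p. \<Sum>b<p. \<Sum>l<p. ?g l a b) = (\<Sum>a<p. \<Sum>l<p. \<Sum>b<p. ?g l a b)"
    by (intro sum.cong refl sum.swap)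
  also have "\<dots> = (\<Sum>l<p. \<Sum>a<p. \<Sum>b<p. ?g l a b)"
    by (rule sum.swap)
  finally have "Re (\<Sum>a<p. \<Sum>b<p. of_real (A$$(a,b)) * compression n p X U a a b b)
      = (\<Sum>l<p. \<Sum>a<p. \<Sum>b<p. ?g l a b) + lam * (\<Sum>a<p. R a a)" .
  moreover have "0 \<le> (\<Sum>a<p. \<Sum>b<p. ?g l a b)" for l
    using psd_compression_weighted_nonneg[OF X, of "c l" U] by (simp add: R_def Re_sum)
  ultimately show ?thesis unfolding R_def by (simp add: sum_nonneg)
qed

lemma ampl_gamma_psd:
  assumes A: "A \<in> carrier_mat p p" "A\<^sup>T = A"
    and bound: "\<And>x. lam * sq_norm p x \<le> quad_form p (\<lambda>i j. A$$(i,j)) x"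
    and t: "0 \<le> t" "0 \<le> t / real p + lam"
    and X: "psd (n*p) X"
  shows "psd (n*p) (ampl n p (gamma A t) X)"
proof (rule psdI[OF ampl_carrier ampl_gamma_self_adjoint[OF A X]])
  fix v :: "complex vec" assume v: "v \<in> carrier_vec (n*p)"
  define U where "U r a = v $ (r*p+a)" for r a
  define Q where "Q a c = Re (compression n p X U a c a c)" for a c
  have Q0: "0 \<le> Q a c" if "c < p" for a c
    unfolding Q_def using psd_compression_diag_nonneg[OF X that] .
  have diag: "(\<Sum>a<p. Q a a) \<le> Re (\<Sum>a<p. \<Sum>c<p. compression n p X U a c a c)"
  proof -
    have "(\<Sum>a<p. Q a a) \<le> (\<Sum>a<p. \<Sum>c<p. Q a c)"
      by (intro sum_mono member_le_sum) (auto intro: Q0)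
    then show ?thesis unfolding Q_def by (simp add: Re_sum)
  qed
  have "Re (conjugate v \<bullet> (ampl n p (gamma A t) X *\<^sub>v v))
      = t / real p * Re (\<Sum>a<p. \<Sum>c<p. compression n p X U a c a c)
        + Re (\<Sum>a<p. \<Sum>b<p. of_real (A$$(a,b)) * compression n p X U a a b b)"
    unfolding quadratic_form_ampl_gamma[OF A(1) v] U_def by (simp add: Re_of_real_div_of_nat_mult)
  also have "\<dots> \<ge> (t / real p + lam) * (\<Sum>a<p. Q a a)"
    using diag psd_schur_compression_lower_bound[OF A bound X, of U] t(1)
    unfolding Q_def distrib_right by (intro add_mono mult_left_mono) auto
  moreover have "0 \<le> (t / real p + lam) * (\<Sum>a<p. Q a a)"
    using t(2) by (intro mult_nonneg_nonneg sum_nonneg) (auto intro: Q0)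
  ultimately show "0 \<le> Re (conjugate v \<bullet> (ampl n p (gamma A t) X *\<^sub>v v))"
    by linarith
qed

lemma psd_transpose_schur_compression_lower_bound:
  fixes A :: "real mat"
  assumes A: "A \<in> carrier_mat p p" "A\<^sup>T = A"
    and A01: "\<And>a b. a < p \<Longrightarrow> b < p \<Longrightarrow> 0 \<le> A$$(a,b) \<and> A$$(a,b) \<le> 1"
    and X: "psd (n*p) X"
  shows "- (\<Sum>a<p. \<Sum>c<p. Re (compression n p X U a c a c))
    \<le> Re (\<Sum>a<p. \<Sum>b<p. of_real (A$$(b,a)) * compression n p X U a b b a)"
proof -
  define Q where "Q a c = Re (compression n p X U a c a c)" for a c
  define R where "R a b = Re (compression n p X U a b b a)" for a b
  have "(\<Sum>a<p. \<Sum>b<p. A$$(b,a) * R a b) = (\<Sum>a<p. \<Sum>b<p. A$$(a,b) * R b a)"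
    by (rule sum.swap)
  moreover have "(\<Sum>a<p. \<Sum>b<p. A$$(b,a) * R a b) = (\<Sum>a<p. \<Sum>b<p. A$$(a,b) * R a b)"
    using symmetric_index[OF A] by (intro sum.cong refl) auto
  ultimately have "2 * (\<Sum>a<p. \<Sum>b<p. A$$(b,a) * R a b)
      = (\<Sum>a<p. \<Sum>b<p. A$$(a,b) * (R a b + R b a))"
    by (simp add: sum.distrib distrib_left)
  also have "\<dots> \<ge> (\<Sum>a<p. \<Sum>b<p. - (Q a b + Q b a))"
  proof (intro sum_mono)
    fix a b assume "a \<in> {..<p}" "b \<in> {..<p}"
    then have "- (Q a b + Q b a) \<le> R a b + R b a" "0 \<le> Q a b" "0 \<le> Q b a"
      "0 \<le> A$$(a,b)" "A$$(a,b) \<le> 1"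
      using psd_compression_swap_bound[OF X, of a b U] psd_compression_diag_nonneg[OF X]
        A01[of a b] unfolding Q_def R_def by auto
    then show "- (Q a b + Q b a) \<le> A$$(a,b) * (R a b + R b a)"
    proof (cases "0 \<le> R a b + R b a")
      case True
      then show ?thesis using \<open>0 \<le> Q a b\<close> \<open>0 \<le> Q b a\<close> \<open>0 \<le> A$$(a,b)\<close>
        by (smt (verit) mult_nonneg_nonneg)
    next
      case False
      then have "1 * (R a b + R b a) \<le> A$$(a,b) * (R a b + R b a)"
        using \<open>A$$(a,b) \<le> 1\<close> by (intro mult_right_mono_neg) auto
      then show ?thesis using \<open>- (Q a b + Q b a) \<le> R a b + R b a\<close> by simp
    qed
  qed
  also have "(\<Sum>a<p. \<Sum>b<p. - (Q a b + Q b a)) = - 2 * (\<Sum>a<p. \<Sum>c<p. Q a c)"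
    using sum.swap[of "\<lambda>a b. Q b a" "{..<p}" "{..<p}"] by (simp add: sum_subtractf sum_negf)
  finally show ?thesis unfolding Q_def R_def by (simp add: Re_sum)
qed

lemma ampl_gamma_transpose_psd:
  assumes A: "A \<in> carrier_mat p p" "A\<^sup>T = A"
    and A01: "\<And>a b. a < p \<Longrightarrow> b < p \<Longrightarrow> 0 \<le> A$$(a,b) \<and> A$$(a,b) \<le> 1"
    and t: "1 \<le> t / real p"
    and X: "psd (n*p) X"
  shows "psd (n*p) (ampl n p (\<lambda>B. (gamma A t B)\<^sup>T) X)"
proof (rule psdI[OF ampl_carrier ampl_gamma_transpose_self_adjoint[OF A X]])
  fix v :: "complex vec" assume v: "v \<in> carrier_vec (n*p)"
  define U where "U r a = v $ (r*p+a)" for r a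
  let ?S = "\<Sum>a<p. \<Sum>c<p. Re (compression n p X U a c a c)"
  have "0 \<le> ?S" by (intro sum_nonneg psd_compression_diag_nonneg[OF X]) auto
  then have "1 * ?S \<le> t / real p * ?S" using t by (intro mult_right_mono)
  moreover have "Re (conjugate v \<bullet> (ampl n p (\<lambda>B. (gamma A t B)\<^sup>T) X *\<^sub>v v))
      = t / real p * ?S + Re (\<Sum>a<p. \<Sum>b<p. of_real (A$$(b,a)) * compression n p X U a b b a)"
    unfolding quadratic_form_ampl_gamma_transpose[OF A(1) v] U_def
    by (simp add: Re_of_real_div_of_nat_mult Re_sum)
  ultimately show "0 \<le> Re (conjugate v \<bullet> (ampl n p (\<lambda>B. (gamma A t B)\<^sup>T) X *\<^sub>v v))"
    using psd_transpose_schur_compression_lower_bound[OF A A01 X, of U] by linarith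
qed

text \<open>\<open>\<Sum>\<^sub>r\<^sub>,\<^sub>s E\<^sub>r\<^sub>s \<otimes> E\<^sub>r\<^sub>s = w w\<^sup>*\<close> with \<open>w = \<Sum>\<^sub>r e\<^sub>r \<otimes> e\<^sub>r\<close>, the unnormalised maximally entangled
  projection.\<close>
definition max_entangled :: "nat \<Rightarrow> complex mat" where
  "max_entangled p = mat (p*p) (p*p) (\<lambda>(i,j). if i mod p = i div p \<and> j mod p = j div p then 1 else 0)"

lemma max_entangled_index:
  assumes "r < p" "s < p" "a < p" "b < p"
  shows "max_entangled p $$ (r*p+a, s*p+b) = (if a = r \<and> b = s then 1 else 0)"
  using block_index[OF assms(1,3)] block_index[OF assms(2,4)] unfolding max_entangled_def by simp

lemma max_entangled_psd: "psd (p*p) (max_entangled p)"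
proof -
  have X: "max_entangled p \<in> carrier_mat (p*p) (p*p)" unfolding max_entangled_def by simp
  have h: "mat_adjoint (max_entangled p) = max_entangled p"
    by (rule self_adjoint_of_blocks[OF X]) (auto simp: max_entangled_index)
  show ?thesis
  proof (rule psdI[OF X h])
    fix v :: "complex vec" assume v: "v \<in> carrier_vec (p*p)"
    define w where "w r = v $ (r*p+r)" for r
    have "conjugate v \<bullet> (max_entangled p *\<^sub>v v) = (\<Sum>r<p. \<Sum>a<p. \<Sum>s<p. \<Sum>b<p.
        if s = b then if r = a then cnj (w a) * w b else 0 else 0)"
      unfolding quadratic_form_blocks[OF X v] w_def
      by (intro sum.cong refl) (auto simp: max_entangled_index)
    also have "\<dots> = (\<Sum>a<p. \<Sum>b<p. cnj (w a) * w b)"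
      by (subst sum_reorder4) simp
    also have "\<dots> = cnj (\<Sum>r<p. w r) * (\<Sum>s<p. w s)"
      by (simp add: sum_product)
    finally show "0 \<le> Re (conjugate v \<bullet> (max_entangled p *\<^sub>v v))"
      by (simp only: mult.commute[of "cnj (\<Sum>r<p. w r)"] complex_mult_cnj Re_complex_of_real) simp
  qed
qed

lemma compression_max_entangled:
  assumes "a < p" "b < p" "c < p" "d < p"
    and U: "\<And>r e. r < p \<Longrightarrow> e < p \<Longrightarrow> U r e = (if r = e then complex_of_real (x r) else 0)"
  shows "compression p p (max_entangled p) U a c b d
    = (if c = a \<and> d = b then complex_of_real (x a * x b) else 0)"
proof -
  have "compression p p (max_entangled p) U a c b d = (\<Sum>r<p. \<Sum>s<p.
      if s = b then if r = a then if c = a \<and> d = b then complex_of_real (x a * x b) else 0 else 0 else 0)"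
    unfolding compression_def by (intro sum.cong refl) (use assms in \<open>auto simp: max_entangled_index\<close>)
  then show ?thesis using assms by simp
qed

lemma completely_positive_gamma_bound:
  assumes A: "A \<in> carrier_mat p p" and p: "0 < p"
    and x: "sq_norm p x = 1" "quad_form p (\<lambda>i j. A$$(i,j)) x = lam"
    and cp: "completely_positive p (gamma A t)"
  shows "- real p * lam \<le> t"
proof -
  txt \<open>Test at \<open>u = \<Sum>\<^sub>r x\<^sub>r e\<^sub>r \<otimes> e\<^sub>r\<close>: the value is \<open>t/p \<parallel>x\<parallel>\<^sup>2 + x\<^sup>T A x\<close>.\<close>
  define u where "u = vec (p*p) (\<lambda>i. if i div p = i mod p then complex_of_real (x (i div p)) else 0)"
  have u: "u \<in> carrier_vec (p*p)" unfolding u_def by simp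
  define U where "U r a = u $ (r*p+a)" for r a
  have U: "U r e = (if r = e then complex_of_real (x r) else 0)" if "r < p" "e < p" for r e
    unfolding U_def u_def using block_index[OF that] block_index[OF that(2) that(2)] by auto
  have "(\<Sum>a<p. \<Sum>c<p. compression p p (max_entangled p) U a c a c) = complex_of_real (sq_norm p x)"
    unfolding sq_norm_def by (simp add: compression_max_entangled[OF _ _ _ _ U] power2_eq_square)
  moreover have "(\<Sum>a<p. \<Sum>b<p. of_real (A$$(a,b)) * compression p p (max_entangled p) U a a b b)
      = complex_of_real (quad_form p (\<lambda>i j. A$$(i,j)) x)"
    unfolding quad_form_def by (simp add: compression_max_entangled[OF _ _ _ _ U] mult.assoc)
  ultimately have "Re (conjugate u \<bullet> (ampl p p (gamma A t) (max_entangled p) *\<^sub>v u)) = t / real p + lam"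
    using x unfolding quadratic_form_ampl_gamma[OF A u] U_def[symmetric]
    by (simp add: Re_of_real_div_of_nat_mult)
  moreover have "psd (p*p) (ampl p p (gamma A t) (max_entangled p))"
    using cp max_entangled_psd unfolding completely_positive_def by blast
  ultimately have "0 \<le> t / real p + lam" using u unfolding psd_def by metis
  then show ?thesis using p by (simp add: field_simps)
qed

theorem mainTheorem9:
  fixes p :: nat and A :: "real mat"
  assumes "adjacency_matrix p A"
    and "A \<noteq> 0\<^sub>m p p"
  shows "t_cp A = - real p * lambda_min A \<and> t_ppt A = - real p * lambda_min A"
proof -
  have A: "A \<in> carrier_mat p p" "A\<^sup>T = A"
    and A01: "\<And>a b. a < p \<Longrightarrow> b < p \<Longrightarrow> 0 \<le> A$$(a,b) \<and> A$$(a,b) \<le> 1"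
    using assms(1) unfolding adjacency_matrix_def by fastforce+
  have p: "0 < p" using A(1) assms(2) by (intro gr0I) auto
  obtain x where x: "sq_norm p x = 1" "quad_form p (\<lambda>i j. A$$(i,j)) x = lambda_min A"
    and bound: "\<And>y. lambda_min A * sq_norm p y \<le> quad_form p (\<lambda>i j. A$$(i,j)) y"
    using lambda_min_rayleigh[OF A p] by blast
  have "real p * 1 \<le> real p * - lambda_min A"
    using adjacency_rayleigh_bound_le[OF assms bound] by (intro mult_left_mono) auto
  then have t_large: "1 \<le> t / real p" "0 \<le> t / real p + lambda_min A" "0 \<le> t"
    if "- real p * lambda_min A \<le> t" for t
    using that p by (auto simp: field_simps)
  have cp: "completely_positive p (gamma A t) \<longleftrightarrow> - real p * lambda_min A \<le> t" for t
    using completely_positive_gamma_bound[OF A(1) p x] ampl_gamma_psd[OF A bound] t_large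
    unfolding completely_positive_def by blast
  have ppt: "is_PPT p (gamma A t) \<longleftrightarrow> - real p * lambda_min A \<le> t" for t
    using cp ampl_gamma_transpose_psd[OF A A01] t_large
    unfolding is_PPT_def completely_positive_def by blast
  have "dim_row A = p" using A(1) by simp
  then show ?thesis unfolding t_cp_def t_ppt_def by (simp add: cp ppt Least_equality)
qed

end
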